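(* For all integers $r\ge 3$ and $n\ge 2r$, \[ \log m(n,r)\le \frac{1}{n-r+1}\binom{n}{r}\log\frac{\mathrm{e}\,2^n(r+1)(n-r+1)}{\binom{n}{r}}. \]
   Context: $m(n,r)$ denotes the number of matroids of rank $r$ on the ground set $[n]=\{1,\dots,n\}$. $\log$ is the logarithm to base $2$ and $\mathrm{e}$ is Euler's number. *)

theory Defs
  imports "HOL-Analysis.Analysis"
begin

definition matroid_bases :: "'a set \<Rightarrow> 'a set set \<Rightarrow> bool" where
  "matroid_bases E B \<longleftrightarrow>
     B \<subseteq> Pow E \<and> B \<noteq> {} \<and>
     (\<forall>B1\<in>B. \<forall>B2\<in>B. \<forall>x\<in>B1 - B2. \<exists>y\<in>B2 - B1. insert y (B1 - {x}) \<in> B)"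

definition matroid_rank_bases :: "'a set set \<Rightarrow> nat \<Rightarrow> bool" where
  "matroid_rank_bases B r \<longleftrightarrow> (\<forall>X\<in>B. card X = r)"

definition num_matroids :: "nat \<Rightarrow> nat \<Rightarrow> nat" where
  "num_matroids n r = card {B. matroid_bases {1..n} B \<and> matroid_rank_bases B r}"

end

theory Submission
  imports Defs
begin

text \<open>
  Call an \<open>r\<close>-set \<open>X\<close> a non-basis if it is not a basis. For a non-basis \<open>X\<close> let \<open>Z\<close> be the union
  of the circuits inside the closure of \<open>X\<close>; then \<open>|X \<inter> Z| > rk Z\<close>, while every basis \<open>B\<close> has
  \<open>|B \<inter> Z| \<le> rk Z\<close>. Hence the bases are exactly the \<open>r\<close>-sets respecting all constraints
  \<open>(Z, rk Z)\<close>, and the matroid is determined by this set of constraints. Each such \<open>Z\<close> arises in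
  the same way from at least \<open>r\<close> different \<open>(r-1)\<close>-sets, so there are at most
  \<open>C(n,r-1)/r = C(n,r)/(n-r+1)\<close> constraints, each taken from \<open>Pow [n] \<times> {0..r}\<close>, a set of size
  \<open>T = 2^n (r+1)\<close>. The number of families of at most \<open>M\<close> elements of a \<open>T\<close>-set is at most
  \<open>(e T / M)^M\<close>.
\<close>

locale basis_matroid =
  fixes E :: "'a set" and \<B> :: "'a set set" and r :: nat
  assumes finite_ground: "finite E"
    and matroid_bases: "matroid_bases E \<B>"
    and rank_bases: "matroid_rank_bases \<B> r"
begin

definition indep :: "'a set \<Rightarrow> bool" where
  "indep I \<longleftrightarrow> (\<exists>B\<in>\<B>. I \<subseteq> B)"

definition rk :: "'a set \<Rightarrow> nat" where
  "rk A = Max (card ` {I. I \<subseteq> A \<and> indep I})"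

definition cl :: "'a set \<Rightarrow> 'a set" where
  "cl A = {e\<in>E. rk (insert e A) = rk A}"

text \<open>\<open>F - cyc F\<close> is the set of coloops of the restriction to \<open>F\<close>; so \<open>cyc F\<close> is the union of
  the circuits contained in \<open>F\<close>.\<close>
definition cyc :: "'a set \<Rightarrow> 'a set" where
  "cyc F = {e\<in>F. rk (F - {e}) = rk F}"

subsection \<open>Independent sets and rank\<close>

lemma basis_subset_ground: "B \<in> \<B> \<Longrightarrow> B \<subseteq> E"
  using matroid_bases unfolding matroid_bases_def by auto

lemma card_basis: "B \<in> \<B> \<Longrightarrow> card B = r"
  using rank_bases unfolding matroid_rank_bases_def by auto

lemma bases_nonempty: "\<B> \<noteq> {}"
  using matroid_bases unfolding matroid_bases_def by auto

lemma basis_exchange: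
  "B1 \<in> \<B> \<Longrightarrow> B2 \<in> \<B> \<Longrightarrow> x \<in> B1 - B2 \<Longrightarrow> \<exists>y\<in>B2 - B1. insert y (B1 - {x}) \<in> \<B>"
  using matroid_bases unfolding matroid_bases_def by blast

lemma finite_basis: "B \<in> \<B> \<Longrightarrow> finite B"
  using basis_subset_ground finite_ground finite_subset by blast

lemma indep_subset_ground: "indep I \<Longrightarrow> I \<subseteq> E"
  unfolding indep_def using basis_subset_ground by blast

lemma finite_indep: "indep I \<Longrightarrow> finite I"
  using indep_subset_ground finite_ground finite_subset by blast

lemma card_indep_le: "indep I \<Longrightarrow> card I \<le> r"
  unfolding indep_def using card_basis finite_basis card_mono by metis

lemma indep_subset: "indep J \<Longrightarrow> I \<subseteq> J \<Longrightarrow> indep I"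
  unfolding indep_def by blast

lemma indep_empty: "indep {}"
  unfolding indep_def using bases_nonempty by blast

lemma basis_indep: "B \<in> \<B> \<Longrightarrow> indep B"
  unfolding indep_def by blast

lemma indep_augment:
  assumes I: "indep I" and J: "indep J" and lt: "card I < card J"
  shows "\<exists>e\<in>J - I. indep (insert e I)"
proof (rule ccontr)
  assume no_aug: "\<not> ?thesis"
  obtain B2 where B2: "B2 \<in> \<B>" "J \<subseteq> B2" using J indep_def by blast
  obtain B0 where B0: "B0 \<in> \<B>" "I \<subseteq> B0" using I indep_def by blast
  txt \<open>Take a basis \<open>B1 \<supseteq> I\<close> as close to \<open>B2\<close> as possible.\<close>
  obtain B1 where B1: "B1 \<in> \<B> \<and> I \<subseteq> B1"
    and closest: "\<forall>B. B \<in> \<B> \<and> I \<subseteq> B \<longrightarrow> card (B1 - B2) \<le> card (B - B2)"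
    using ex_has_least_nat[where P="\<lambda>B. B \<in> \<B> \<and> I \<subseteq> B" and k=B0 and m="\<lambda>B. card (B - B2)"] B0
    by blast
  have fB1: "finite B1" using B1 finite_basis by blast
  have sub: "B1 - I \<subseteq> B2 - J"
  proof
    fix x assume x: "x \<in> B1 - I"
    show "x \<in> B2 - J"
    proof (rule ccontr)
      assume nx: "x \<notin> B2 - J"
      show False
      proof (cases "x \<in> J")
        case True
        then have "indep (insert x I)" using x B1 unfolding indep_def by blast
        then show False using no_aug x True by blast
      next
        case False
        then have x12: "x \<in> B1 - B2" using nx x by blast
        then obtain y where y: "y \<in> B2 - B1" "insert y (B1 - {x}) \<in> \<B>"
          using basis_exchange B1 B2 by blast
        have "I \<subseteq> insert y (B1 - {x})" using x B1 by blast
        then have "card (B1 - B2) \<le> card (insert y (B1 - {x}) - B2)" using closest y by blast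
        also have "insert y (B1 - {x}) - B2 = (B1 - B2) - {x}" using y by blast
        also have "card \<dots> < card (B1 - B2)" using x12 fB1 by (meson card_Diff1_less finite_Diff)
        finally show False by simp
      qed
    qed
  qed
  have "card B1 \<le> card I + card (B1 - I)"
    using B1 fB1 card_Diff_subset[of I B1] card_mono[of B1 I] finite_subset[of I B1] by linarith
  moreover have "card (B1 - I) \<le> card (B2 - J)" using sub B2 finite_basis card_mono by (meson finite_Diff)
  moreover have "card (B2 - J) = r - card J"
    using B2 card_basis finite_basis by (metis card_Diff_subset finite_subset)
  moreover have "card J \<le> r" using J card_indep_le by blast
  ultimately have "card B1 < r" using lt by linarith
  then show False using B1 card_basis by simp
qed

lemma finite_indep_subsets: "finite {I. I \<subseteq> A \<and> indep I}"
  by (rule finite_subset[of _ "Pow E"]) (auto simp: finite_ground dest: indep_subset_ground)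

lemma card_le_rk: "indep I \<Longrightarrow> I \<subseteq> A \<Longrightarrow> card I \<le> rk A"
  unfolding rk_def using finite_indep_subsets by (intro Max_ge) auto

lemma rk_witness: "\<exists>I. I \<subseteq> A \<and> indep I \<and> card I = rk A"
proof -
  have "rk A \<in> card ` {I. I \<subseteq> A \<and> indep I}"
    unfolding rk_def using finite_indep_subsets indep_empty by (intro Max_in) auto
  then show ?thesis by auto
qed

lemma rk_le_card: "finite A \<Longrightarrow> rk A \<le> card A"
  using rk_witness[of A] card_mono by metis

lemma rk_le: "rk A \<le> r"
  using rk_witness[of A] card_indep_le by metis

lemma rk_mono: "A \<subseteq> B \<Longrightarrow> rk A \<le> rk B"
  using rk_witness[of A] card_le_rk[of _ B] by fastforce

lemma rk_le_rk_insert: "rk A \<le> rk (insert e A)"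
  by (rule rk_mono) blast

lemma rk_insert_le: "rk (insert e A) \<le> Suc (rk A)"
proof -
  obtain J where J: "J \<subseteq> insert e A" "indep J" "card J = rk (insert e A)"
    using rk_witness by blast
  have "card (J - {e}) \<le> rk A" using J indep_subset card_le_rk by blast
  moreover have "card J \<le> Suc (card (J - {e}))"
    using J(2) finite_indep card_Diff1_le[of J e] by (cases "e \<in> J") auto
  ultimately show ?thesis using J by linarith
qed

lemma indep_extend:
  assumes "indep I" "I \<subseteq> S"
  shows "\<exists>J. I \<subseteq> J \<and> J \<subseteq> S \<and> indep J \<and> card J = rk S"
  using assms
proof (induction "rk S - card I" arbitrary: I)
  case 0
  then show ?case using card_le_rk[of I S] by (intro exI[of _ I]) auto
next
  case (Suc k)
  obtain J0 where J0: "J0 \<subseteq> S" "indep J0" "card J0 = rk S" using rk_witness by blast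
  have "card I < card J0" using Suc J0 by linarith
  then obtain e where e: "e \<in> J0 - I" "indep (insert e I)" using indep_augment Suc J0 by blast
  have "card (insert e I) = Suc (card I)" using e finite_indep Suc.prems by simp
  then have "k = rk S - card (insert e I)" using Suc.hyps by simp
  then obtain J where "insert e I \<subseteq> J" "J \<subseteq> S" "indep J" "card J = rk S"
    using Suc.hyps(1)[of "insert e I"] e J0 Suc.prems by blast
  then show ?case by blast
qed

lemma rk_submodular: "rk (A \<union> B) + rk (A \<inter> B) \<le> rk A + rk B"
proof -
  obtain I where I: "I \<subseteq> A \<inter> B" "indep I" "card I = rk (A \<inter> B)" using rk_witness by blast
  obtain J where J: "I \<subseteq> J" "J \<subseteq> A \<union> B" "indep J" "card J = rk (A \<union> B)"
    using indep_extend[of I "A \<union> B"] I by blast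
  have fJ: "finite J" using J finite_indep by blast
  have "card (J \<inter> A) \<le> rk A" "card (J \<inter> B) \<le> rk B"
    using J indep_subset card_le_rk by (meson inf_le1 inf_le2)+
  moreover have "card (J \<inter> A \<inter> B) = card I"
  proof -
    have "card (J \<inter> A \<inter> B) \<le> card I"
      using J I indep_subset card_le_rk[of "J \<inter> A \<inter> B" "A \<inter> B"] by (metis inf_le1 inf_assoc inf_le2)
    moreover have "card I \<le> card (J \<inter> A \<inter> B)" using I J fJ by (intro card_mono) auto
    ultimately show ?thesis by linarith
  qed
  moreover have "card J + card (J \<inter> A \<inter> B) = card (J \<inter> A) + card (J \<inter> B)"
  proof -
    have "J = (J \<inter> A) \<union> (J \<inter> B)" using J by blast
    then show ?thesis using card_Un_Int[of "J \<inter> A" "J \<inter> B"] fJ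
      by (metis finite_Int inf_assoc inf_left_idem inf_commute)
  qed
  ultimately show ?thesis using I J by linarith
qed

subsection \<open>Closure and coloops\<close>

lemma rk_union_eq:
  assumes "finite B" "\<forall>f\<in>B. rk (insert f A) = rk A"
  shows "rk (A \<union> B) = rk A"
  using assms
proof (induction B rule: finite_induct)
  case empty
  then show ?case by simp
next
  case (insert f B)
  have IH: "rk (A \<union> B) = rk A" and f: "rk (insert f A) = rk A" using insert by auto
  have "rk (A \<union> insert f B) + rk (insert f A \<inter> (A \<union> B)) \<le> rk (insert f A) + rk (A \<union> B)"
    using rk_submodular[of "insert f A" "A \<union> B"] by (simp add: insert_commute)
  moreover have "rk A \<le> rk (insert f A \<inter> (A \<union> B))" by (rule rk_mono) blast
  moreover have "rk A \<le> rk (A \<union> insert f B)" by (rule rk_mono) blast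
  ultimately show ?case using IH f by linarith
qed

lemma subset_cl: "A \<subseteq> E \<Longrightarrow> A \<subseteq> cl A"
  unfolding cl_def by (auto simp: insert_absorb)

lemma cl_subset_ground: "cl A \<subseteq> E"
  unfolding cl_def by blast

lemma rk_cl:
  assumes "A \<subseteq> E"
  shows "rk (cl A) = rk A"
proof -
  have "finite (cl A)" using cl_subset_ground finite_ground finite_subset by blast
  then have "rk (A \<union> cl A) = rk A" by (rule rk_union_eq) (auto simp: cl_def)
  moreover have "A \<union> cl A = cl A" using subset_cl[OF assms] by blast
  ultimately show ?thesis by simp
qed

lemma rk_insert_eq_of_mem_cl:
  assumes "A \<subseteq> F" "e \<in> cl A"
  shows "rk (insert e F) = rk F"
proof -
  have "insert e A \<union> F = insert e F" using assms by blast
  then have "rk (insert e F) + rk (insert e A \<inter> F) \<le> rk (insert e A) + rk F"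
    using rk_submodular[of "insert e A" F] by simp
  moreover have "rk A \<le> rk (insert e A \<inter> F)" using assms by (intro rk_mono) blast
  moreover have "rk (insert e A) = rk A" using assms unfolding cl_def by blast
  ultimately show ?thesis using rk_le_rk_insert[of F e] by linarith
qed

lemma cl_mono: "A \<subseteq> F \<Longrightarrow> cl A \<subseteq> cl F"
  using rk_insert_eq_of_mem_cl unfolding cl_def by blast

lemma cl_eq_of_rk_eq:
  assumes F: "cl F = F" and AF: "A \<subseteq> F" and rkA: "rk A = rk F"
  shows "cl A = F"
proof
  show "cl A \<subseteq> F" using cl_mono[OF AF] F by simp
  show "F \<subseteq> cl A"
  proof
    fix e assume e: "e \<in> F"
    have "rk (insert e A) \<le> rk F" using e AF by (intro rk_mono) blast
    then have "rk (insert e A) = rk A" using rkA rk_le_rk_insert[of A e] by linarith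
    moreover have "e \<in> E" using e F cl_subset_ground by blast
    ultimately show "e \<in> cl A" unfolding cl_def by blast
  qed
qed

lemma cl_idem:
  assumes "A \<subseteq> E"
  shows "cl (cl A) = cl A"
proof
  show "cl A \<subseteq> cl (cl A)" using subset_cl cl_subset_ground by blast
  show "cl (cl A) \<subseteq> cl A"
  proof
    fix e assume e: "e \<in> cl (cl A)"
    then have "rk (insert e (cl A)) = rk A" using rk_cl[OF assms] unfolding cl_def by simp
    moreover have "rk (insert e A) \<le> rk (insert e (cl A))" using subset_cl[OF assms] by (intro rk_mono) blast
    ultimately have "rk (insert e A) = rk A" using rk_le_rk_insert[of A e] by linarith
    then show "e \<in> cl A" using e cl_subset_ground unfolding cl_def by blast
  qed
qed

lemma rk_remove_coloop:
  assumes d: "d \<in> F - cyc F" and A: "A \<subseteq> F" "d \<in> A"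
  shows "rk (A - {d}) + 1 = rk A"
proof -
  have "rk F \<le> Suc (rk (F - {d}))" using rk_insert_le[of d "F - {d}"] d by (simp add: insert_absorb)
  moreover have "rk (F - {d}) \<le> rk F" by (rule rk_mono) blast
  ultimately have Fd: "rk (F - {d}) + 1 = rk F" using d unfolding cyc_def by auto
  have "A \<union> (F - {d}) = F" "A \<inter> (F - {d}) = A - {d}" using A d by blast+
  then have "rk F + rk (A - {d}) \<le> rk A + rk (F - {d})" using rk_submodular[of A "F - {d}"] by simp
  moreover have "rk A \<le> Suc (rk (A - {d}))" using rk_insert_le[of d "A - {d}"] A by (simp add: insert_absorb)
  ultimately show ?thesis using Fd by linarith
qed

lemma rk_diff_coloops:
  assumes "finite D" "D \<subseteq> F - cyc F" "A \<subseteq> F" "D \<subseteq> A"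
  shows "rk (A - D) + card D = rk A"
  using assms
proof (induction D rule: finite_induct)
  case empty
  then show ?case by simp
next
  case (insert d D)
  have "rk (A - D - {d}) + 1 = rk (A - D)"
    by (rule rk_remove_coloop[of d F]) (use insert in auto)
  moreover have "A - insert d D = A - D - {d}" by blast
  ultimately show ?case using insert by simp
qed

lemma rk_cyc:
  assumes "finite F"
  shows "rk (cyc F) + card (F - cyc F) = rk F"
proof -
  have "F - (F - cyc F) = cyc F" unfolding cyc_def by blast
  then show ?thesis using rk_diff_coloops[of "F - cyc F" F F] assms by simp
qed

lemma cyc_idem:
  assumes "finite F"
  shows "cyc (cyc F) = cyc F"
proof (intro subset_antisym subsetI)
  fix e assume e: "e \<in> cyc F"
  have "rk (F - {e} - (F - cyc F)) + card (F - cyc F) = rk (F - {e})"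
    using e assms by (intro rk_diff_coloops) auto
  moreover have "F - {e} - (F - cyc F) = cyc F - {e}" unfolding cyc_def by blast
  ultimately have "rk (cyc F - {e}) + card (F - cyc F) = rk (F - {e})" by simp
  moreover have "rk (F - {e}) = rk F" using e unfolding cyc_def by blast
  ultimately have "rk (cyc F - {e}) = rk (cyc F)" using rk_cyc[OF assms] by linarith
  then show "e \<in> cyc (cyc F)" using e unfolding cyc_def by blast
qed (auto simp: cyc_def)

lemma coloops_subset_spanning:
  assumes "A \<subseteq> F" "rk A = rk F"
  shows "F - cyc F \<subseteq> A"
proof
  fix d assume d: "d \<in> F - cyc F"
  show "d \<in> A"
  proof (rule ccontr)
    assume "d \<notin> A"
    then have "rk A \<le> rk (F - {d})" using assms by (intro rk_mono) blast
    moreover have "rk (F - {d}) + 1 = rk F" using rk_remove_coloop[of d F F] d by blast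
    ultimately show False using assms by linarith
  qed
qed

lemma cl_remove_coloop:
  assumes F: "cl F = F" and d: "d \<in> F - cyc F"
  shows "cl (F - {d}) = F - {d}"
proof
  have "F \<subseteq> E" using cl_subset_ground[of F] F by simp
  then show "F - {d} \<subseteq> cl (F - {d})" by (intro subset_cl) blast
  show "cl (F - {d}) \<subseteq> F - {d}"
  proof
    fix e assume e: "e \<in> cl (F - {d})"
    then have "e \<in> F" using cl_mono[of "F - {d}" F] F by blast
    moreover have "e \<noteq> d"
    proof
      assume "e = d"
      then have "rk F = rk (F - {d})" using e d unfolding cl_def by (simp add: insert_absorb)
      then show False using d unfolding cyc_def by auto
    qed
    ultimately show "e \<in> F - {d}" by blast
  qed
qed

lemma cyc_remove_coloop:
  assumes d: "d \<in> F - cyc F"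
  shows "cyc (F - {d}) = cyc F"
proof (rule set_eqI)
  fix e
  have Fd: "rk (F - {d}) + 1 = rk F" using rk_remove_coloop[of d F F] d by blast
  show "e \<in> cyc (F - {d}) \<longleftrightarrow> e \<in> cyc F"
  proof (cases "e \<in> F - {d}")
    case True
    have "rk (F - {e} - {d}) + 1 = rk (F - {e})" using True d by (intro rk_remove_coloop[OF d]) auto
    moreover have "F - {d} - {e} = F - {e} - {d}" by blast
    ultimately have "rk (F - {d} - {e}) + 1 = rk (F - {e})" by simp
    then have "rk (F - {d} - {e}) = rk (F - {d}) \<longleftrightarrow> rk (F - {e}) = rk F" using Fd by linarith
    then show ?thesis using True unfolding cyc_def by auto
  next
    case False
    then show ?thesis using d unfolding cyc_def by auto
  qed
qed

subsection \<open>Spanning subsets of a cyclic set\<close>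

lemma exists_spanning_subset:
  assumes "finite Z" "rk Z \<le> s" "s \<le> card Z"
  shows "\<exists>S\<subseteq>Z. card S = s \<and> rk S = rk Z"
proof -
  obtain I where I: "I \<subseteq> Z" "indep I" "card I = rk Z" using rk_witness by blast
  have "card (Z - I) = card Z - card I" using I finite_indep by (simp add: card_Diff_subset)
  then obtain T where T: "T \<subseteq> Z - I" "card T = s - card I"
    using obtain_subset_with_card_n[of "s - card I" "Z - I"] assms by (metis diff_le_mono)
  have "card (I \<union> T) = s"
    using I T assms finite_indep finite_subset[of T Z] by (subst card_Un_disjoint) auto
  moreover have "rk (I \<union> T) = rk Z"
    using card_le_rk[of I "I \<union> T"] rk_mono[of "I \<union> T" Z] I T by fastforce
  ultimately show ?thesis using I T by (intro exI[of _ "I \<union> T"]) auto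
qed

lemma spanning_exchange:
  assumes Z: "finite Z" "cyc Z = Z" and S: "S \<subseteq> Z" "rk S = rk Z" "card S < card Z" and e: "e \<in> S"
  shows "\<exists>f\<in>Z - S. rk (insert f (S - {e})) = rk Z"
proof (cases "rk (S - {e}) = rk Z")
  case True
  have "Z - S \<noteq> {}" using S finite_subset[OF S(1) Z(1)] card_mono by (metis Diff_eq_empty_iff leD)
  then obtain f where f: "f \<in> Z - S" by blast
  then have "rk (insert f (S - {e})) \<le> rk Z" using S by (intro rk_mono) blast
  then show ?thesis using True f rk_le_rk_insert[of "S - {e}" f] by (intro bexI[of _ f]) auto
next
  case False
  txt \<open>Since \<open>e\<close> is no coloop of \<open>Z\<close>, \<open>S - {e}\<close> does not span \<open>Z - {e}\<close>.\<close>
  have "\<exists>f\<in>Z - {e}. rk (insert f (S - {e})) \<noteq> rk (S - {e})"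
  proof (rule ccontr)
    assume "\<not> ?thesis"
    then have "rk ((S - {e}) \<union> (Z - {e})) = rk (S - {e})" by (intro rk_union_eq) (use Z in auto)
    moreover have "(S - {e}) \<union> (Z - {e}) = Z - {e}" using S by blast
    moreover have "rk (Z - {e}) = rk Z" using Z S e unfolding cyc_def by blast
    ultimately show False using False by simp
  qed
  then obtain f where f: "f \<in> Z - {e}" "rk (insert f (S - {e})) \<noteq> rk (S - {e})" by blast
  have "f \<notin> S"
  proof
    assume "f \<in> S"
    then have "insert f (S - {e}) = S - {e}" using f by blast
    then show False using f by simp
  qed
  have "rk S \<le> Suc (rk (S - {e}))" using rk_insert_le[of e "S - {e}"] e by (simp add: insert_absorb)
  moreover have "rk (S - {e}) \<le> rk (insert f (S - {e}))" by (rule rk_le_rk_insert)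
  moreover have "rk (insert f (S - {e})) \<le> rk Z" using f S by (intro rk_mono) blast
  ultimately have "rk (insert f (S - {e})) = rk Z" using f S by linarith
  then show ?thesis using \<open>f \<notin> S\<close> f by blast
qed

lemma card_spanning_subsets_ge:
  assumes Z: "finite Z" "cyc Z = Z" and s: "rk Z \<le> s" "s < card Z"
  shows "s + 1 \<le> card {S. S \<subseteq> Z \<and> card S = s \<and> rk S = rk Z}" (is "_ \<le> card ?SP")
proof -
  obtain S0 where S0: "S0 \<subseteq> Z" "card S0 = s" "rk S0 = rk Z"
    using exists_spanning_subset[OF Z(1) s(1)] s(2) by auto
  have fS0: "finite S0" using S0 Z finite_subset by blast
  have exchange: "\<forall>e\<in>S0. \<exists>f. f \<in> Z - S0 \<and> rk (insert f (S0 - {e})) = rk Z"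
    using spanning_exchange[OF Z S0(1,3)] S0 s by blast
  from bchoice[OF exchange] obtain g
    where g: "\<forall>e\<in>S0. g e \<in> Z - S0 \<and> rk (insert (g e) (S0 - {e})) = rk Z" by blast
  define h where "h e = insert (g e) (S0 - {e})" for e
  txt \<open>\<open>S0\<close> together with its \<open>s\<close> one-element exchanges are \<open>s + 1\<close> distinct spanning sets.\<close>
  have "h e \<in> ?SP" if e: "e \<in> S0" for e
  proof -
    have ge: "g e \<in> Z - S0" "rk (h e) = rk Z" using g e unfolding h_def by auto
    then have "card (h e) = Suc (card (S0 - {e}))" unfolding h_def using fS0 by simp
    also have "\<dots> = s" using card.remove[OF fS0 e] S0(2) by simp
    finally show ?thesis using ge e S0(1) unfolding h_def by blast
  qed
  then have "insert S0 (h ` S0) \<subseteq> ?SP" using S0 by blast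
  moreover have "card (insert S0 (h ` S0)) = s + 1"
  proof -
    have trace: "h e \<inter> S0 = S0 - {e}" if "e \<in> S0" for e using g that unfolding h_def by auto
    have "inj_on h S0"
    proof (rule inj_onI)
      fix e1 e2 assume e: "e1 \<in> S0" "e2 \<in> S0" "h e1 = h e2"
      then have "S0 - {e1} = S0 - {e2}" using trace[OF e(1)] trace[OF e(2)] by simp
      then show "e1 = e2" using e(1) by blast
    qed
    moreover have "S0 \<notin> h ` S0" using g unfolding h_def by auto
    ultimately show ?thesis using fS0 S0(2) by (simp add: card_image)
  qed
  moreover have "finite ?SP" by (rule finite_subset[of _ "Pow Z"]) (use Z in auto)
  ultimately show ?thesis using card_mono by metis
qed

subsection \<open>Non-bases\<close>

lemma rk_nonbasis_lt:
  assumes X: "X \<subseteq> E" "card X = r" "X \<notin> \<B>"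
  shows "rk X < r"
proof -
  have fX: "finite X" using X finite_ground finite_subset by blast
  have "rk X \<noteq> r"
  proof
    assume "rk X = r"
    then obtain I where I: "I \<subseteq> X" "indep I" "card I = card X" using rk_witness X by metis
    then have "indep X" using card_subset_eq[OF fX] by metis
    then obtain B where B: "B \<in> \<B>" "X \<subseteq> B" unfolding indep_def by blast
    then have "X = B" using card_subset_eq[OF finite_basis[OF B(1)] B(2)] X card_basis by simp
    then show False using X B by simp
  qed
  then show ?thesis using rk_le_card[OF fX] X by simp
qed

lemma card_inter_cyc_cl:
  assumes "X \<subseteq> E"
  shows "card (X \<inter> cyc (cl X)) + card (cl X - cyc (cl X)) = card X"
proof -
  have fX: "finite X" using assms finite_ground finite_subset by blast
  have D: "cl X - cyc (cl X) \<subseteq> X"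
    using coloops_subset_spanning[OF subset_cl[OF assms]] rk_cl[OF assms] by simp
  have "card (X \<inter> cyc (cl X)) = card (X - (cl X - cyc (cl X)))"
    using subset_cl[OF assms] by (intro arg_cong[where f = card]) blast
  also have "\<dots> = card X - card (cl X - cyc (cl X))"
    using card_Diff_subset[OF finite_subset[OF D fX] D] .
  finally show ?thesis using card_mono[OF fX D] by linarith
qed

lemma rk_cyc_cl:
  assumes "X \<subseteq> E"
  shows "rk (cyc (cl X)) + card (cl X - cyc (cl X)) = rk X"
proof -
  have "finite (cl X)" using cl_subset_ground finite_ground finite_subset by blast
  then show ?thesis using rk_cyc rk_cl[OF assms] by simp
qed

lemma rk_cyc_cl_lt_card:
  assumes X: "X \<subseteq> E" "card X = r" "X \<notin> \<B>"
  shows "rk (cyc (cl X)) < card (X \<inter> cyc (cl X))"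
  using rk_cyc_cl[OF X(1)] card_inter_cyc_cl[OF X(1)] rk_nonbasis_lt[OF X] X(2) by linarith

lemma cyc_cl_union_coloops:
  assumes F: "cl F = F" "finite F" and S: "S \<subseteq> cyc F" "rk S = rk (cyc F)"
  shows "cyc (cl ((F - cyc F) \<union> S)) = cyc F"
proof -
  let ?Y = "(F - cyc F) \<union> S"
  have YF: "?Y \<subseteq> F" using S unfolding cyc_def by blast
  have "rk (?Y - (F - cyc F)) + card (F - cyc F) = rk ?Y" using F YF by (intro rk_diff_coloops) auto
  moreover have "?Y - (F - cyc F) = S" using S by blast
  ultimately have "rk ?Y = rk F" using rk_cyc[OF F(2)] S by simp
  then show ?thesis using cl_eq_of_rk_eq[OF F(1) YF] by simp
qed

lemma cyc_cl_remove_coloop: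
  assumes F: "cl F = F" and X: "X \<subseteq> F" "rk X = rk F" and d: "d \<in> F - cyc F"
  shows "cyc (cl (X - {d})) = cyc F"
proof -
  have "d \<in> X" using coloops_subset_spanning[OF X] d by blast
  then have "rk (X - {d}) + 1 = rk X" using rk_remove_coloop[OF d X(1)] by blast
  moreover have "rk (F - {d}) + 1 = rk F" using rk_remove_coloop[OF d] d by blast
  ultimately have "rk (X - {d}) = rk (F - {d})" using X by linarith
  moreover have "X - {d} \<subseteq> F - {d}" using X by blast
  ultimately have "cl (X - {d}) = F - {d}" using cl_eq_of_rk_eq[OF cl_remove_coloop[OF F d]] by blast
  then show ?thesis using cyc_remove_coloop[OF d] by simp
qed

lemma card_cyc_cl_fiber_ge_closed:
  assumes F: "cl F = F" and X: "X \<subseteq> F" "rk X = rk F" "card X = Suc (s + card (F - cyc F))"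
    and s: "rk (cyc F) \<le> s" "s < card (cyc F)"
  shows "Suc s + card (F - cyc F)
    \<le> card {Y. Y \<subseteq> E \<and> card Y = s + card (F - cyc F) \<and> cyc (cl Y) = cyc F}" (is "_ \<le> card ?T")
proof -
  define Z where "Z = cyc F"
  define D where "D = F - Z"
  define SP where "SP = {S. S \<subseteq> Z \<and> card S = s \<and> rk S = rk Z}"
  have FE: "F \<subseteq> E" using cl_subset_ground[of F] F by simp
  have fF: "finite F" using FE finite_ground finite_subset by blast
  have ZF: "Z \<subseteq> F" unfolding Z_def cyc_def by blast
  have fZ: "finite Z" and fD: "finite D" using ZF fF finite_subset unfolding D_def by auto
  have DX: "D \<subseteq> X" unfolding D_def Z_def using coloops_subset_spanning[OF X(1,2)] .
  have cSP: "Suc s \<le> card SP"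
    unfolding SP_def using card_spanning_subsets_ge[OF fZ _ s[folded Z_def]] cyc_idem[OF fF]
    by (simp add: Z_def)
  txt \<open>Two disjoint families in the fiber: spanning \<open>s\<close>-subsets of \<open>Z\<close> joined with the coloops,
    and \<open>X\<close> minus one coloop.\<close>
  have fam1: "(\<lambda>S. D \<union> S) ` SP \<subseteq> ?T"
  proof
    fix Y assume "Y \<in> (\<lambda>S. D \<union> S) ` SP"
    then obtain S where S: "S \<subseteq> Z" "card S = s" "rk S = rk Z" and Y: "Y = D \<union> S"
      unfolding SP_def by blast
    have "D \<inter> S = {}" using S unfolding D_def by blast
    then have "card Y = s + card D"
      using Y S fD finite_subset[OF S(1) fZ] by (simp add: card_Un_disjoint)
    moreover have "cyc (cl Y) = Z" using cyc_cl_union_coloops[OF F fF] S Y unfolding D_def Z_def by simp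
    moreover have "Y \<subseteq> E" using Y S ZF FE unfolding D_def by blast
    ultimately show "Y \<in> ?T" unfolding D_def Z_def by blast
  qed
  have fam2: "(\<lambda>d. X - {d}) ` D \<subseteq> ?T"
    using cyc_cl_remove_coloop[OF F X(1,2)] DX X FE finite_subset[OF X(1) fF]
    unfolding D_def Z_def by auto
  have inj1: "inj_on (\<lambda>S. D \<union> S) SP"
  proof -
    have "S = (D \<union> S) \<inter> Z" if "S \<in> SP" for S using that unfolding SP_def D_def by blast
    then show ?thesis by (intro inj_onI) metis
  qed
  have inj2: "inj_on (\<lambda>d. X - {d}) D" using DX by (auto intro: inj_onI)
  have disj: "(\<lambda>S. D \<union> S) ` SP \<inter> (\<lambda>d. X - {d}) ` D = {}"
  proof -
    have "D \<subseteq> Y" if "Y \<in> (\<lambda>S. D \<union> S) ` SP" for Y using that by blast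
    moreover have "\<not> D \<subseteq> Y" if "Y \<in> (\<lambda>d. X - {d}) ` D" for Y using that by blast
    ultimately show ?thesis by (meson disjoint_iff)
  qed
  have fSP: "finite SP" unfolding SP_def by (rule finite_subset[of _ "Pow Z"]) (use fZ in auto)
  have fT: "finite ?T" by (rule finite_subset[of _ "Pow E"]) (use finite_ground in auto)
  have "card SP + card D = card ((\<lambda>S. D \<union> S) ` SP \<union> (\<lambda>d. X - {d}) ` D)"
    using card_Un_disjoint[OF finite_imageI[OF fSP] finite_imageI[OF fD] disj]
    by (simp add: card_image[OF inj1] card_image[OF inj2])
  also have "\<dots> \<le> card ?T" by (rule card_mono[OF fT Un_least[OF fam1 fam2]])
  finally show ?thesis using cSP unfolding D_def Z_def by linarith
qed

lemma card_cyc_cl_fiber_ge: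
  assumes X: "X \<subseteq> E" "card X = r" "X \<notin> \<B>"
  shows "r \<le> card {Y. Y \<subseteq> E \<and> card Y = r - 1 \<and> cyc (cl Y) = cyc (cl X)}"
proof -
  define F where "F = cl X"
  define s where "s = card (X \<inter> cyc F) - 1"
  have clF: "cl F = F" and XF: "X \<subseteq> F" and rkF: "rk X = rk F"
    unfolding F_def using cl_idem subset_cl rk_cl X by auto
  have "finite F" unfolding F_def using cl_subset_ground finite_ground finite_subset by blast
  then have "finite (cyc F)" unfolding cyc_def by simp
  then have "card (X \<inter> cyc F) \<le> card (cyc F)" by (intro card_mono) auto
  then have s: "rk (cyc F) \<le> s" "s < card (cyc F)" and cX: "card X = Suc (s + card (F - cyc F))"
    using rk_cyc_cl_lt_card[OF X] card_inter_cyc_cl[OF X(1)] unfolding s_def F_def by auto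
  then have "r \<le> card {Y. Y \<subseteq> E \<and> card Y = s + card (F - cyc F) \<and> cyc (cl Y) = cyc F}"
    using card_cyc_cl_fiber_ge_closed[OF clF XF rkF cX] X(2) by simp
  moreover have "s + card (F - cyc F) = r - 1" using cX X(2) by simp
  ultimately show ?thesis unfolding F_def by (simp only:)
qed

end

subsection \<open>Encoding a matroid by rank constraints\<close>

definition bases_of_constraints :: "'a set \<Rightarrow> nat \<Rightarrow> ('a set \<times> nat) set \<Rightarrow> 'a set set" where
  "bases_of_constraints E r P = {X. X \<subseteq> E \<and> card X = r \<and> (\<forall>(Z, k)\<in>P. card (X \<inter> Z) \<le> k)}"

context basis_matroid
begin

definition rank_constraints :: "('a set \<times> nat) set" where
  "rank_constraints = (\<lambda>X. (cyc (cl X), rk (cyc (cl X)))) ` {X. X \<subseteq> E \<and> card X = r \<and> X \<notin> \<B>}"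

lemma rank_constraints_subset: "rank_constraints \<subseteq> Pow E \<times> {0..r}"
  unfolding rank_constraints_def cyc_def using cl_subset_ground rk_le by auto

lemma card_rank_constraints_le: "card rank_constraints \<le> (card E choose (r - 1)) div r"
proof -
  define Zs where "Zs = (\<lambda>X. cyc (cl X)) ` {X. X \<subseteq> E \<and> card X = r \<and> X \<notin> \<B>}"
  define Ys where "Ys = {Y. Y \<subseteq> E \<and> card Y = r - 1}"
  define fiber where "fiber Z = {Y \<in> Ys. cyc (cl Y) = Z}" for Z
  have fZs: "finite Zs" unfolding Zs_def using finite_ground by simp
  have fYs: "finite Ys" unfolding Ys_def by (rule finite_subset[of _ "Pow E"]) (use finite_ground in auto)
  have fiber_ge: "r \<le> card (fiber Z)" if "Z \<in> Zs" for Z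
    using that card_cyc_cl_fiber_ge unfolding Zs_def fiber_def Ys_def by auto
  txt \<open>The fibers are disjoint, each of size at least \<open>r\<close>.\<close>
  have "r * card Zs = (\<Sum>Z\<in>Zs. r)" by simp
  also have "\<dots> \<le> (\<Sum>Z\<in>Zs. card (fiber Z))" by (intro sum_mono fiber_ge)
  also have "\<dots> = card (\<Union>Z\<in>Zs. fiber Z)"
    by (rule card_UN_disjoint[symmetric]) (use fZs fYs in \<open>auto simp: fiber_def\<close>)
  also have "\<dots> \<le> card Ys" using fYs by (intro card_mono) (auto simp: fiber_def)
  finally have rZ: "r * card Zs \<le> card E choose (r - 1)"
    unfolding Ys_def using n_subsets[OF finite_ground] by simp
  have "rank_constraints = (\<lambda>Z. (Z, rk Z)) ` Zs"
    unfolding rank_constraints_def Zs_def by (simp add: image_image)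
  then have card_le: "card rank_constraints \<le> card Zs" using card_image_le[OF fZs] by simp
  show ?thesis
  proof (cases "Zs = {}")
    case True
    then show ?thesis using card_le by simp
  next
    case False
    then have "{X. X \<subseteq> E \<and> card X = r \<and> X \<notin> \<B>} \<noteq> {}" unfolding Zs_def by simp
    then obtain X where "X \<subseteq> E" "card X = r" "X \<notin> \<B>" by blast
    then have "rk X < r" by (rule rk_nonbasis_lt)
    then have "0 < r" by simp
    then have "card Zs \<le> (card E choose (r - 1)) div r"
      using rZ by (simp add: less_eq_div_iff_mult_less_eq mult.commute)
    then show ?thesis using card_le by linarith
  qed
qed

lemma bases_of_rank_constraints: "bases_of_constraints E r rank_constraints = \<B>"
proof
  show "\<B> \<subseteq> bases_of_constraints E r rank_constraints"
  proof
    fix B assume B: "B \<in> \<B>"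
    have "card (B \<inter> Z) \<le> rk Z" for Z
      using basis_indep[OF B] indep_subset card_le_rk by (meson inf_le1 inf_le2)
    then show "B \<in> bases_of_constraints E r rank_constraints"
      unfolding bases_of_constraints_def rank_constraints_def
      using B basis_subset_ground card_basis by auto
  qed
  show "bases_of_constraints E r rank_constraints \<subseteq> \<B>"
  proof
    fix X assume X: "X \<in> bases_of_constraints E r rank_constraints"
    show "X \<in> \<B>"
    proof (rule ccontr)
      assume "X \<notin> \<B>"
      then have nonbasis: "X \<subseteq> E" "card X = r" "X \<notin> \<B>"
        using X unfolding bases_of_constraints_def by auto
      then have "(cyc (cl X), rk (cyc (cl X))) \<in> rank_constraints"
        unfolding rank_constraints_def by blast
      moreover have "\<forall>(Z, k)\<in>rank_constraints. card (X \<inter> Z) \<le> k"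
        using X unfolding bases_of_constraints_def by blast
      ultimately have "card (X \<inter> cyc (cl X)) \<le> rk (cyc (cl X))" by (auto dest: bspec)
      then show False using rk_cyc_cl_lt_card[OF nonbasis] by simp
    qed
  qed
qed

end

subsection \<open>Counting\<close>

lemma card_subsets_card_le:
  assumes "finite U"
  shows "card {P. P \<subseteq> U \<and> card P \<le> m} = (\<Sum>j\<le>m. card U choose j)"
proof -
  have "{P. P \<subseteq> U \<and> card P \<le> m} = (\<Union>j\<in>{..m}. {P. P \<subseteq> U \<and> card P = j})" by auto
  moreover have "card (\<Union>j\<in>{..m}. {P. P \<subseteq> U \<and> card P = j}) = (\<Sum>j\<le>m. card {P. P \<subseteq> U \<and> card P = j})"
    by (rule card_UN_disjoint) (auto intro: finite_subset[of _ "Pow U"] simp: assms)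
  ultimately show ?thesis using n_subsets[OF assms] by simp
qed

lemma sum_binomial_le_exp_powr:
  fixes T m :: nat and M :: real
  assumes M0: "0 < M" and MT: "M \<le> real T" and mM: "real m \<le> M"
  shows "(\<Sum>j\<le>m. real (T choose j)) \<le> (exp 1 * real T / M) powr M"
proof -
  define x where "x = M / real T"
  have T0: "real T > 0" using M0 MT by linarith
  have x0: "0 < x" and x1: "x \<le> 1" unfolding x_def using M0 T0 MT by auto
  txt \<open>Weight the \<open>j\<close>-th term by \<open>x ^ j / x powr M \<ge> 1\<close> and complete the binomial sum.\<close>
  have "(\<Sum>j\<le>m. real (T choose j)) \<le> (\<Sum>j\<le>m. real (T choose j) * x ^ j / x powr M)"
  proof (rule sum_mono)
    fix j assume "j \<in> {..m}"
    then have "x powr M \<le> x ^ j" using powr_mono'[of "real j" M x] mM x0 x1 by (auto simp: powr_realpow)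
    then show "real (T choose j) \<le> real (T choose j) * x ^ j / x powr M"
      using x0 by (simp add: le_divide_eq mult_left_mono)
  qed
  also have "\<dots> \<le> (\<Sum>j\<le>T. real (T choose j) * x ^ j) / x powr M"
    using mM MT x0 by (subst sum_divide_distrib[symmetric], intro divide_right_mono sum_mono2) auto
  also have "(\<Sum>j\<le>T. real (T choose j) * x ^ j) = (x + 1) ^ T" by (simp add: binomial_ring)
  also have "(x + 1) ^ T \<le> exp x ^ T"
    using exp_ge_add_one_self[of x] x0 by (intro power_mono) (auto simp: add.commute)
  also have "exp x ^ T = exp M" unfolding x_def using T0 by (simp add: exp_of_nat_mult[symmetric])
  also have "exp M / x powr M = (exp 1 * real T / M) powr M"
  proof -
    have "exp 1 * real T / M = exp 1 / x" unfolding x_def using M0 T0 by simp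
    then have "(exp 1 * real T / M) powr M = exp 1 powr M / x powr M" by (simp add: powr_divide x0)
    then show ?thesis by (simp add: powr_def)
  qed
  finally show ?thesis using x0 by (simp add: divide_right_mono)
qed

lemma num_matroids_le_sum_binomial:
  "num_matroids n r \<le> (\<Sum>j\<le>(n choose (r - 1)) div r. 2 ^ n * (r + 1) choose j)"
proof -
  define U where "U = Pow {1..n} \<times> {0..r}"
  define Q where "Q = {P. P \<subseteq> U \<and> card P \<le> (n choose (r - 1)) div r}"
  have "{B. matroid_bases {1..n} B \<and> matroid_rank_bases B r} \<subseteq> bases_of_constraints {1..n} r ` Q"
  proof
    fix B assume "B \<in> {B. matroid_bases {1..n} B \<and> matroid_rank_bases B r}"
    then interpret basis_matroid "{1..n}" B r by unfold_locales auto
    show "B \<in> bases_of_constraints {1..n} r ` Q"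
      using bases_of_rank_constraints rank_constraints_subset card_rank_constraints_le
      unfolding Q_def U_def by (intro image_eqI[of _ _ rank_constraints]) auto
  qed
  moreover have "finite Q" unfolding Q_def U_def by (rule finite_subset[of _ "Pow U"]) (auto simp: U_def)
  ultimately have "num_matroids n r \<le> card Q"
    unfolding num_matroids_def by (meson card_image_le card_mono finite_imageI le_trans)
  also have "card Q = (\<Sum>j\<le>(n choose (r - 1)) div r. card U choose j)"
    unfolding Q_def by (rule card_subsets_card_le) (simp add: U_def)
  also have "card U = 2 ^ n * (r + 1)" unfolding U_def by (simp add: card_cartesian_product card_Pow)
  finally show ?thesis .
qed

lemma matroid_bases_uniform:
  assumes "finite E" "r \<le> card E"
  shows "matroid_bases E {X. X \<subseteq> E \<and> card X = r}"
  unfolding matroid_bases_def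
proof (intro conjI ballI)
  show "{X. X \<subseteq> E \<and> card X = r} \<noteq> {}" using obtain_subset_with_card_n[OF assms(2)] by blast
  fix B1 B2 x assume B: "B1 \<in> {X. X \<subseteq> E \<and> card X = r}" "B2 \<in> {X. X \<subseteq> E \<and> card X = r}"
    and x: "x \<in> B1 - B2"
  have fin: "finite B1" "finite B2" using B assms finite_subset by auto
  have "\<not> B2 \<subseteq> B1" using card_subset_eq[OF fin(1)] B x by auto
  then obtain y where y: "y \<in> B2 - B1" by blast
  then have "card (insert y (B1 - {x})) = Suc (card (B1 - {x}))" using fin by simp
  also have "\<dots> = r" using card.remove[OF fin(1), of x] x B by simp
  finally have "card (insert y (B1 - {x})) = r" .
  then show "\<exists>y\<in>B2 - B1. insert y (B1 - {x}) \<in> {X. X \<subseteq> E \<and> card X = r}" using y B x by blast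
qed auto

lemma num_matroids_pos:
  assumes "r \<le> n"
  shows "0 < num_matroids n r"
proof -
  have "{X. X \<subseteq> {1..n} \<and> card X = r} \<in> {B. matroid_bases {1..n} B \<and> matroid_rank_bases B r}"
    using matroid_bases_uniform[of "{1..n}" r] assms by (simp add: matroid_rank_bases_def)
  moreover have "finite {B. matroid_bases {1..n} B \<and> matroid_rank_bases B r}"
    unfolding matroid_bases_def by (rule finite_subset[of _ "Pow (Pow {1..n})"]) auto
  ultimately show ?thesis unfolding num_matroids_def using card_gt_0_iff by blast
qed

lemma binomial_div_eq:
  assumes "1 \<le> r" "r \<le> n"
  shows "real (n choose r) / (real n - real r + 1) = real (n choose (r - 1)) / real r"
proof -
  have "r * (n choose r) = (n - r + 1) * (n choose (r - 1))"
    using Suc_times_binomial_add[of "r - 1" "n - r"] assms by (simp add: Suc_diff_le)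
  then have "real r * real (n choose r) = (real n - real r + 1) * real (n choose (r - 1))"
    using assms by (metis of_nat_1 of_nat_add of_nat_diff of_nat_mult)
  then show ?thesis using assms by (simp add: field_simps)
qed

theorem log_num_matroids_le:
  fixes n r :: nat
  assumes r: "1 \<le> r" "r \<le> n"
  shows "log 2 (real (num_matroids n r))
    \<le> (1 / (real n - real r + 1)) * real (n choose r)
       * log 2 (exp 1 * 2 ^ n * (real r + 1) * (real n - real r + 1) / real (n choose r))"
proof -
  define M where "M = real (n choose r) / (real n - real r + 1)"
  define T where "T = 2 ^ n * (r + 1)"
  have nr: "0 < real n - real r + 1" and "0 < n choose r" using r by auto
  then have M0: "0 < M" unfolding M_def by simp
  have "M \<le> real (n choose r)" unfolding M_def using r by (simp add: divide_le_eq)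
  also have "n choose r \<le> T" unfolding T_def by (rule order_trans[OF binomial_le_pow2]) simp
  finally have MT: "M \<le> real T" by simp
  have mM: "real ((n choose (r - 1)) div r) \<le> M"
    unfolding M_def binomial_div_eq[OF r] by (rule of_nat_div_le_of_nat)
  have "real (num_matroids n r) \<le> (\<Sum>j\<le>(n choose (r - 1)) div r. real (T choose j))"
    using num_matroids_le_sum_binomial unfolding T_def by (metis of_nat_le_iff of_nat_sum)
  also have "\<dots> \<le> (exp 1 * real T / M) powr M" by (rule sum_binomial_le_exp_powr[OF M0 MT mM])
  finally have "log 2 (real (num_matroids n r)) \<le> log 2 ((exp 1 * real T / M) powr M)"
    using num_matroids_pos[OF r(2)] M0 by (subst log_le_cancel_iff) (auto simp: T_def)
  also have "\<dots> = M * log 2 (exp 1 * real T / M)" by (simp add: log_powr)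
  also have "exp 1 * real T / M
      = exp 1 * 2 ^ n * (real r + 1) * (real n - real r + 1) / real (n choose r)"
    unfolding M_def T_def using nr by (simp add: field_simps)
  finally show ?thesis unfolding M_def by simp
qed

theorem corollary5p5:
  fixes n r :: nat
  assumes "r \<ge> 3" and "n \<ge> 2 * r"
  shows "log 2 (real (num_matroids n r))
    \<le> (1 / (real n - real r + 1)) * real (n choose r)
       * log 2 (exp 1 * 2 ^ n * (real r + 1) * (real n - real r + 1) / real (n choose r))"
  using assms by (intro log_num_matroids_le) auto

end
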